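(* Let $\mathcal K$ be an even normalized kernel with $3\le\mathfrak m_4$, let $w_1,w_2>0$, $u_1\le u_2$ real and $\sigma>0$, and set $$\tilde u=\frac{w_1u_1+w_2u_2}{w_1+w_2}+\frac{4(\mathfrak m_4-3)\sigma^2(w_1-w_2)(u_1-u_2)}{(w_1+w_2)[(u_1-u_2)^2+2(\mathfrak m_4-3)\sigma^2]}$$ (the second term being $0$ when $u_1=u_2$), and $g(u)=(u-u_1)^2(u-u_2)^2(u-\tilde u)$. If the constants $c_1,c_2$ satisfy $c_1>0$ and $0<c_2<\frac56c_1^2$, then for every $s>0$ the polynomial $$h(u;s)=g(u)-c_1s\,g^{(2)}(u)+c_2s^2g^{(4)}(u)$$ has $5$ distinct real roots.
   Context: $\mathcal K:\mathbb R\to[0,\infty)$ is a kernel with $\mathfrak m_j:=\int_{\mathbb R}\xi^j\mathcal K(\xi)\,d\xi<\infty$ for all $j$, normalized so that $\mathfrak m_0=1,\mathfrak m_1=0,\mathfrak m_2=1$; $g^{(k)}$ denotes the $k$-th derivative of $g$ in $u$. *)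

theory Defs
  imports "HOL-Analysis.Analysis" "HOL-Computational_Algebra.Polynomial"
begin

definition kmoment :: "(real \<Rightarrow> real) \<Rightarrow> nat \<Rightarrow> real" where
  "kmoment K j = (LINT x|lborel. x ^ j * K x)"

definition normalized_kernel :: "(real \<Rightarrow> real) \<Rightarrow> bool" where
  "normalized_kernel K \<longleftrightarrow>
     (\<forall>x. 0 \<le> K x) \<and>
     (\<forall>j. integrable lborel (\<lambda>x. x ^ j * K x)) \<and>
     kmoment K 0 = 1 \<and> kmoment K 1 = 0 \<and> kmoment K 2 = 1"

definition even_kernel :: "(real \<Rightarrow> real) \<Rightarrow> bool" where
  "even_kernel K \<longleftrightarrow> (\<forall>x. K (- x) = K x)"

definition tilde_u :: "real \<Rightarrow> real \<Rightarrow> real \<Rightarrow> real \<Rightarrow> real \<Rightarrow> real \<Rightarrow> real" where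
  "tilde_u m4 w1 w2 u1 u2 \<sigma> =
     (w1 * u1 + w2 * u2) / (w1 + w2)
     + (if u1 = u2 then 0 else
        4 * (m4 - 3) * \<sigma>^2 * (w1 - w2) * (u1 - u2)
        / ((w1 + w2) * ((u1 - u2)^2 + 2 * (m4 - 3) * \<sigma>^2)))"

end

theory Submission
  imports Defs
begin

text \<open>
  Centre at \<open>m = (u1 + u2)/2\<close>, let \<open>d = (u2 - u1)/2\<close>, \<open>a = c1 s\<close>, \<open>b = c2 s\<^sup>2\<close>
  and \<open>c = t - m\<close> for the third root \<open>t = tilde_u \<dots>\<close>. Then
  \<open>h(m + y) = (y - c) A(y) + 8y (a (d\<^sup>2 - y\<^sup>2) + 12b)\<close> with the even quartic
  \<open>A(y) = (y\<^sup>2 - d\<^sup>2)\<^sup>2 - 12a y\<^sup>2 + 4a d\<^sup>2 + 24b\<close>. As a quadratic \<open>Q\<close> in \<open>y\<^sup>2\<close>,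
  \<open>Q(0) > 0\<close>, and \<open>0 < b < 5a\<^sup>2/6\<close> gives \<open>Q(z\<^sub>0) < 0\<close> at \<open>z\<^sub>0 = d\<^sup>2 + 12b/a\<close>.
  So \<open>A\<close> has roots \<open>\<plusminus>y\<^sub>1, \<plusminus>y\<^sub>2\<close> with \<open>y\<^sub>1\<^sup>2 < z\<^sub>0 < y\<^sub>2\<^sup>2\<close>, at which
  \<open>h(m + y) = 8a y (z\<^sub>0 - y\<^sup>2)\<close> alternates in sign. With the signs of the monic quintic
  \<open>h\<close> at \<open>\<plusminus>\<infinity>\<close> this gives five sign changes, hence five roots. The value of \<open>t\<close>
  plays no role.
\<close>

definition poly_smoothing :: "'a::idom \<Rightarrow> 'a \<Rightarrow> 'a poly \<Rightarrow> 'a poly" where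
  "poly_smoothing a b g = g - smult a ((pderiv ^^ 2) g) + smult b ((pderiv ^^ 4) g)"

lemma
  fixes g :: "'a::{idom,ring_char_0} poly"
  shows degree_poly_smoothing: "degree (poly_smoothing a b g) = degree g"
    and lead_coeff_poly_smoothing: "lead_coeff (poly_smoothing a b g) = lead_coeff g"
proof -
  define r where "r = smult b ((pderiv ^^ 4) g) - smult a ((pderiv ^^ 2) g)"
  have smoothing: "poly_smoothing a b g = g + r"
    unfolding poly_smoothing_def r_def by simp
  have "r = 0 \<or> degree r < degree g"
  proof (cases "degree g = 0")
    case True
    then have "pderiv g = 0"
      by (simp add: pderiv_eq_0_iff)
    then show ?thesis
      by (simp add: r_def eval_nat_numeral funpow_Suc_right del: funpow.simps)
  next
    case False
    then show ?thesis
      unfolding r_def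
      by (intro disjI2 degree_diff_less le_less_trans[OF degree_smult_le])
         (simp_all add: degree_higher_pderiv)
  qed
  then show "degree (poly_smoothing a b g) = degree g"
    unfolding smoothing by (auto intro: degree_add_eq_left)
  from \<open>r = 0 \<or> degree r < degree g\<close> show "lead_coeff (poly_smoothing a b g) = lead_coeff g"
    unfolding smoothing by (metis add.commute add.right_neutral lead_coeff_add_le)
qed

lemma poly_eventually_pos_at_top:
  fixes p :: "real poly"
  assumes "0 < lead_coeff p"
  shows "eventually (\<lambda>x. 0 < poly p x) at_top"
proof -
  obtain n where "\<forall>x\<ge>n. lead_coeff p \<le> poly p x"
    using poly_pinfty_gt_lc[OF assms] by blast
  then show ?thesis
    using assms by (auto simp: eventually_at_top_linorder intro: less_le_trans)
qed

lemma poly_eventually_neg_at_bot: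
  fixes p :: "real poly"
  assumes "0 < lead_coeff p" and "odd (degree p)"
  shows "eventually (\<lambda>x. poly p x < 0) at_bot"
proof -
  define q where "q = - pcompose p [:0, -1:]"
  have "lead_coeff q = lead_coeff p"
    using assms(2) by (simp add: q_def lead_coeff_comp)
  then obtain n where n: "\<And>x. n \<le> x \<Longrightarrow> 0 < poly q x"
    using assms(1) poly_eventually_pos_at_top[of q] by (auto simp: eventually_at_top_linorder)
  have "poly p x < 0" if "x \<le> - n" for x
    using n[of "- x"] that by (simp add: q_def poly_pcompose)
  then show ?thesis
    by (auto simp: eventually_at_bot_linorder)
qed

lemma card_poly_roots_ge_sign_changes:
  fixes p :: "real poly"
  assumes "successively (\<lambda>x y. x < y \<and> poly p x * poly p y < 0) xs"
  shows "length xs - 1 \<le> card {u. poly p u = 0}"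
proof -
  let ?P = "\<lambda>x y. x < y \<and> poly p x * poly p y < 0"
  let ?roots = "{u. poly p u = 0}"
  have "length ys \<le> card (?roots \<inter> {x<..})" if "successively ?P (x # ys)" for x ys
    using that
  proof (induction ys arbitrary: x)
    case Nil
    show ?case by simp
  next
    case (Cons y ys)
    then have xy: "x < y" "poly p x * poly p y < 0" and tail: "successively ?P (y # ys)"
      by simp_all
    obtain r where r: "x < r" "r < y" "poly p r = 0"
      using poly_IVT[OF xy] by blast
    have "p \<noteq> 0"
      using xy(2) by auto
    then have "finite ?roots"
      by (rule poly_roots_finite)
    have "Suc (length ys) \<le> card (insert r (?roots \<inter> {y<..}))"
      using Cons.IH[OF tail] \<open>finite ?roots\<close> r(2) by simp
    also have "\<dots> \<le> card (?roots \<inter> {x<..})"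
      using \<open>finite ?roots\<close> r xy(1) by (intro card_mono) auto
    finally show ?case by simp
  qed
  note roots_above = this
  show ?thesis
  proof (cases xs)
    case Nil
    then show ?thesis by simp
  next
    case (Cons x ys)
    show ?thesis
    proof (cases "ys = []")
      case False
      then have "p \<noteq> 0"
        using assms Cons by (cases ys) auto
      then have "card (?roots \<inter> {x<..}) \<le> card ?roots"
        by (intro card_mono poly_roots_finite) auto
      then show ?thesis
        using roots_above assms Cons by fastforce
    qed (simp add: Cons)
  qed
qed

lemma card_poly_roots_eq_degree_if_sign_changes:
  fixes p :: "real poly"
  assumes "0 < lead_coeff p" and "odd (degree p)"
    and "successively (\<lambda>x y. x < y \<and> poly p x * poly p y < 0) xs"
    and "length xs = degree p - 1" and "xs \<noteq> []"
    and "0 < poly p (hd xs)" and "poly p (last xs) < 0"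
  shows "card {u. poly p u = 0} = degree p"
proof -
  have "eventually (\<lambda>x. poly p x < 0 \<and> x < hd xs) at_bot"
    using assms(1,2) by (intro eventually_conj poly_eventually_neg_at_bot eventually_gt_at_bot)
  then obtain x0 where x0: "poly p x0 < 0" "x0 < hd xs"
    by (auto simp: eventually_at_bot_linorder)
  have "eventually (\<lambda>x. 0 < poly p x \<and> last xs < x) at_top"
    using assms(1) by (intro eventually_conj poly_eventually_pos_at_top eventually_gt_at_top)
  then obtain x1 where x1: "0 < poly p x1" "last xs < x1"
    by (auto simp: eventually_at_top_linorder)
  have "successively (\<lambda>x y. x < y \<and> poly p x * poly p y < 0) (x0 # xs @ [x1])"
    using assms(3,5-7) x0 x1
    by (simp add: successively_Cons successively_append_iff mult_neg_pos mult_pos_neg)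
  then have "degree p \<le> card {u. poly p u = 0}"
    using card_poly_roots_ge_sign_changes assms(2,4) by fastforce
  moreover have "card {u. poly p u = 0} \<le> degree p"
    using assms(1) by (intro card_poly_roots_bound) auto
  ultimately show ?thesis
    by simp
qed

lemma poly_smoothing_double_root_quintic:
  fixes u1 u2 t a b y :: real
  defines "m \<equiv> (u1 + u2) / 2" and "d \<equiv> (u2 - u1) / 2"
  shows "poly (poly_smoothing a b ([:- u1, 1:] ^ 2 * [:- u2, 1:] ^ 2 * [:- t, 1:])) (m + y)
    = (y - (t - m)) * ((y^2 - d^2)^2 - 12*a*y^2 + 4*a*d^2 + 24*b) + 8*y*(a*(d^2 - y^2) + 12*b)"
  unfolding poly_smoothing_def m_def d_def
  by (simp add: numeral_eq_Suc pderiv_mult pderiv_power_Suc pderiv_pCons field_simps power2_eq_square)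

lemma quadratic_roots_around:
  fixes a b z :: real
  assumes "0 < b" and "0 < z" and "z^2 + a*z + b < 0"
  obtains z1 z2 where "0 < z1" "z1 < z" "z < z2" "z1^2 + a*z1 + b = 0" "z2^2 + a*z2 + b = 0"
proof -
  define q where "q = [:b, a, 1:]"
  have poly_q: "poly q x = x^2 + a*x + b" for x
    by (simp add: q_def algebra_simps power2_eq_square)
  define w where "w = z + \<bar>a\<bar> + 1"
  have "0 < w * (w + a) + b"
    using assms(1,2) by (intro add_nonneg_pos mult_nonneg_nonneg) (auto simp: w_def)
  then have "0 < poly q w"
    by (simp add: poly_q power2_eq_square algebra_simps)
  moreover have "poly q z < 0" "0 < poly q 0" "z < w"
    unfolding poly_q w_def using assms by simp_all
  ultimately obtain z1 z2 where "0 < z1" "z1 < z" "poly q z1 = 0" "z < z2" "poly q z2 = 0"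
    using poly_IVT_neg[of 0 z q] poly_IVT_pos[of z w q] assms(2) by blast
  then show thesis
    using that unfolding poly_q by blast
qed

lemma smoothed_quintic_sign_changes:
  fixes a b d c :: real
  assumes "0 < a" and "0 < b" and "b < 5/6 * a^2"
  defines "F \<equiv> \<lambda>y. (y - c) * ((y^2 - d^2)^2 - 12*a*y^2 + 4*a*d^2 + 24*b)
                    + 8*y*(a*(d^2 - y^2) + 12*b)"
  obtains y1 y2 where "0 < y1" "y1 < y2" "0 < F (- y2)" "F (- y1) < 0" "0 < F y1" "F y2 < 0"
proof -
  define Q where "Q z = (z - d^2)^2 - 12*a*z + 4*a*d^2 + 24*b" for z
  define z0 where "z0 = d^2 + 12*b/a"
  have Q_expand: "Q z = z^2 + (- (2*d^2 + 12*a))*z + (d^4 + 4*a*d^2 + 24*b)" for z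
    by (simp add: Q_def power2_diff algebra_simps flip: power_mult)
  have F_eq: "F y = (y - c) * Q (y^2) + 8*a*y*(z0 - y^2)" for y
    using assms(1) by (simp add: F_def Q_def z0_def field_simps)
  have F_root: "F y = 8*a*y*(z0 - y^2)" if "Q (y^2) = 0" for y
    using that by (simp add: F_eq)
  have "0 < d^4 + 4*a*d^2 + 24*b"
    using assms(1,2) by (intro add_nonneg_pos) auto
  moreover have "0 < z0"
    using assms(1,2) by (simp add: z0_def add_nonneg_pos)
  moreover have "Q z0 < 0"
  proof -
    have "a^2 * Q z0 = - (8*a^3*d^2 + 24*b*(5*a^2 - 6*b))"
      using assms(1) by (simp add: Q_def z0_def field_simps power2_eq_square power3_eq_cube)
    also have "\<dots> < 0"
    proof -
      have "0 < b * (5*a^2 - 6*b)"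
        using assms by (intro mult_pos_pos) auto
      moreover have "0 \<le> a^3 * d^2"
        using assms(1) by simp
      ultimately show ?thesis
        by linarith
    qed
    finally show ?thesis
      using assms(1) by (simp add: mult_less_0_iff)
  qed
  ultimately obtain z1 z2 where z: "0 < z1" "z1 < z0" "z0 < z2" "Q z1 = 0" "Q z2 = 0"
    using quadratic_roots_around[of "d^4 + 4*a*d^2 + 24*b" z0 "- (2*d^2 + 12*a)"]
    unfolding Q_expand by blast
  define y1 where "y1 = sqrt z1"
  define y2 where "y2 = sqrt z2"
  have "z1 < z2"
    using z by linarith
  then have "y1 < y2"
    unfolding y1_def y2_def by simp
  have y: "0 < y1" "y1^2 = z1" "y2^2 = z2"
    using z by (simp_all add: y1_def y2_def)
  have "a * y1 * (z0 - z1) > 0" "a * y2 * (z0 - z2) < 0"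
    using assms(1) y \<open>y1 < y2\<close> z by (simp_all add: mult_pos_neg)
  then show thesis
    using that[OF \<open>0 < y1\<close> \<open>y1 < y2\<close>] F_root[of y1] F_root[of "- y1"] F_root[of y2] F_root[of "- y2"]
      y z by simp
qed

theorem proposition4p3:
  fixes K :: "real \<Rightarrow> real"
    and w1 w2 u1 u2 \<sigma> c1 c2 s :: real
    and g h :: "real poly"
  assumes "normalized_kernel K" and "even_kernel K" and "3 \<le> kmoment K 4"
    and "w1 > 0" and "w2 > 0" and "u1 \<le> u2" and "\<sigma> > 0"
    and "g = [:- u1, 1:] ^ 2 * [:- u2, 1:] ^ 2
             * [:- tilde_u (kmoment K 4) w1 w2 u1 u2 \<sigma>, 1:]"
    and "c1 > 0" and "0 < c2" and "c2 < 5 / 6 * c1 ^ 2"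
    and "s > 0"
    and "h = g - smult (c1 * s) ((pderiv ^^ 2) g) + smult (c2 * s ^ 2) ((pderiv ^^ 4) g)"
  shows "card {u :: real. poly h u = 0} = 5"
proof -
  define t where "t = tilde_u (kmoment K 4) w1 w2 u1 u2 \<sigma>"
  define m where "m = (u1 + u2) / 2"
  define d where "d = (u2 - u1) / 2"
  define a where "a = c1 * s"
  define b where "b = c2 * s ^ 2"
  define F where "F y = (y - (t - m)) * ((y^2 - d^2)^2 - 12*a*y^2 + 4*a*d^2 + 24*b)
                    + 8*y*(a*(d^2 - y^2) + 12*b)" for y
  have h_smoothing: "h = poly_smoothing a b g"
    using assms(13) by (simp add: poly_smoothing_def a_def b_def)
  have g: "g = [:- u1, 1:] ^ 2 * [:- u2, 1:] ^ 2 * [:- t, 1:]"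
    using assms(8) by (simp add: t_def)
  have h_F: "poly h u = F (u - m)" for u
    using poly_smoothing_double_root_quintic[of a b u1 u2 t "u - m"]
    by (simp add: h_smoothing g F_def m_def d_def)
  have "degree g = 5"
    unfolding g by (simp add: degree_mult_eq degree_power_eq del: mult_pCons_left mult_pCons_right)
  have "lead_coeff g = 1"
    unfolding g lead_coeff_mult lead_coeff_power by simp
  have "degree h = 5"
    unfolding h_smoothing degree_poly_smoothing by fact
  have "lead_coeff h = 1"
    unfolding h_smoothing lead_coeff_poly_smoothing by fact
  have "0 < a" "0 < b" "b < 5/6 * a^2"
    using assms(9-12) by (simp_all add: a_def b_def power_mult_distrib)
  then obtain y1 y2 where "0 < y1" "y1 < y2" "0 < F (- y2)" "F (- y1) < 0" "0 < F y1" "F y2 < 0"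
    using smoothed_quintic_sign_changes unfolding F_def by blast
  then show ?thesis
    using card_poly_roots_eq_degree_if_sign_changes[of h "[m - y2, m - y1, m + y1, m + y2]"]
      \<open>degree h = 5\<close> \<open>lead_coeff h = 1\<close>
    by (simp add: h_F mult_neg_pos mult_pos_neg)
qed

end
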